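(* Let $a>0$, $\epsilon>0$, and let $\Xi'\subseteq\Xi^+$ be a finite nonempty set. Put $\mathcal{A}'=\{\xi\in\Xi:\sum_{x\in\mathcal{X}}H_A(\mu,x)\xi(x)\ge a\ \forall\mu\in\Xi'\}$ and $\mathcal{A}=\{\xi\in\Xi^+:\phi_A(\xi)\ge a\}$. Let $(\xi',t')$ be an optimal solution of the linear program: maximize $t$ over $\xi\in\mathcal{A}'$, $t\in\mathbb{R}$, subject to $\sum_{x\in\mathcal{X}}H_D(\mu,x)\xi(x)\ge t$ for all $\mu\in\Xi'$. Then $\mathcal{A}\subseteq\mathcal{A}'$ and $\sup_{\xi\in\mathcal{A}}\phi_D(\xi)\le t'$. Consequently, if $\xi'\in\Xi^+$, $\phi_A(\xi')\ge a$ and $t'-\phi_D(\xi')<\epsilon$, then $\xi'\in\mathcal{A}$ and $\phi_D(\xi')>\sup_{\xi\in\mathcal{A}}\phi_D(\xi)-\epsilon$.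
   Context: $\mathcal{X}$ finite, $f:\mathcal{X}\to\mathbb{R}^p$, $\Xi$ the probability measures on $\mathcal{X}$, $M(\xi)=\sum_x f(x)f^\top(x)\xi(x)$, $\Xi^+=\{\mu\in\Xi: M(\mu)\text{ nonsingular}\}$. $\phi_D(\xi)=\det^{1/p}M(\xi)$ and $\phi_A(\xi)=1/\mathrm{tr}M^{-1}(\xi)$ for $\xi\in\Xi^+$. $H_D(\mu,x)=\frac{\det^{1/p}[M(\mu)]}{p}f^\top(x)M^{-1}(\mu)f(x)$ and $H_A(\mu,x)=\|M^{-1}(\mu)f(x)\|^2/[\mathrm{tr}M^{-1}(\mu)]^2$ for $\mu\in\Xi^+$. *)

theory Defs
  imports "HOL-Analysis.Analysis"
begin

text \<open>Design space X is a finite type 'x; regressor f : 'x => R^p with p = CARD('p).\<close>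

definition designs :: "('x::finite \<Rightarrow> real) set" where
  "designs = {\<xi>. (\<forall>x. 0 \<le> \<xi> x) \<and> sum \<xi> UNIV = 1}"

definition info_matrix :: "('x::finite \<Rightarrow> real^'p) \<Rightarrow> ('x \<Rightarrow> real) \<Rightarrow> real^'p^'p" where
  "info_matrix f \<xi> = (\<Sum>x\<in>UNIV. \<xi> x *\<^sub>R (\<chi> i j. (f x $ i) * (f x $ j)))"

definition designs_plus :: "('x::finite \<Rightarrow> real^'p) \<Rightarrow> ('x \<Rightarrow> real) set" where
  "designs_plus f = {\<xi> \<in> designs. invertible (info_matrix f \<xi>)}"

definition phi_D :: "('x::finite \<Rightarrow> real^'p) \<Rightarrow> ('x \<Rightarrow> real) \<Rightarrow> real" where
  "phi_D f \<xi> = det (info_matrix f \<xi>) powr (1 / real CARD('p))"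

definition phi_A :: "('x::finite \<Rightarrow> real^'p) \<Rightarrow> ('x \<Rightarrow> real) \<Rightarrow> real" where
  "phi_A f \<xi> = 1 / trace (matrix_inv (info_matrix f \<xi>))"

definition H_D :: "('x::finite \<Rightarrow> real^'p) \<Rightarrow> ('x \<Rightarrow> real) \<Rightarrow> 'x \<Rightarrow> real" where
  "H_D f \<mu> x = phi_D f \<mu> / real CARD('p) * (f x \<bullet> (matrix_inv (info_matrix f \<mu>) *v f x))"

definition H_A :: "('x::finite \<Rightarrow> real^'p) \<Rightarrow> ('x \<Rightarrow> real) \<Rightarrow> 'x \<Rightarrow> real" where
  "H_A f \<mu> x = (norm (matrix_inv (info_matrix f \<mu>) *v f x))\<^sup>2 / (trace (matrix_inv (info_matrix f \<mu>)))\<^sup>2"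

end

theory Submission
  imports Defs "Jordan_Normal_Form.Schur_Decomposition"
begin

(* Let M and N be the information matrices of designs mu and xi. The gradient bound
   phi_D(xi) <= sum_x H_D(mu,x) xi(x) reads det(N)^(1/p) <= det(M)^(1/p) * tr(M^-1 N) / p.
   Since M (M^-1 N) = N with M and N positive definite, the eigenvalues of M^-1 N are positive
   reals, and the bound is the AM-GM inequality for them. The bound
   phi_A(xi) <= sum_x H_A(mu,x) xi(x) is Cauchy-Schwarz for tr(M^-1) = sum_x xi(x) <M^-1 f(x), N^-1 f(x)>.
   Hence every xi in A lies in A', and (xi, phi_D(xi)) is feasible for the linear program, so
   phi_D(xi) <= t'. *)

no_notation Matrix.vec_index (infixl "$" 100)
no_notation Matrix.scalar_prod (infix "\<bullet>" 70)

section \<open>Eigenvalue bounds for complex matrices\<close>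

definition mat_trace :: "'a::comm_ring mat \<Rightarrow> 'a" where
  "mat_trace A = (\<Sum>i<dim_row A. A $$ (i, i))"

lemma mat_trace_mult_comm:
  assumes "A \<in> carrier_mat n m" "B \<in> carrier_mat m n"
  shows "mat_trace (A * B) = mat_trace (B * A)"
proof -
  have "mat_trace (A * B) = (\<Sum>i<n. \<Sum>k<m. A $$ (i, k) * B $$ (k, i))"
    using assms by (simp add: mat_trace_def scalar_prod_def atLeast0LessThan)
  also have "\<dots> = (\<Sum>k<m. \<Sum>i<n. B $$ (k, i) * A $$ (i, k))"
    by (subst sum.swap) (simp add: mult.commute)
  also have "\<dots> = mat_trace (B * A)"
    using assms by (simp add: mat_trace_def scalar_prod_def atLeast0LessThan)
  finally show ?thesis .
qed

lemma det_trace_eq_eigenvalues: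
  fixes X :: "complex mat"
  assumes X: "X \<in> carrier_mat n n" and cp: "char_poly X = (\<Prod>e\<leftarrow>es. [:- e, 1:])"
  shows "Determinant.det X = prod_list es" "mat_trace X = sum_list es"
proof -
  obtain T P Q where schur: "schur_decomposition X es = (T, P, Q)"
    by (cases "schur_decomposition X es")
  with schur_decomposition[OF X cp] have sim: "similar_mat_wit X T P Q"
    and ut: "upper_triangular T" and diag: "diag_mat T = es" by auto
  note sim = similar_mat_witD2[OF X sim]
  have "Determinant.det P * Determinant.det Q = 1"
    using det_mult[OF sim(6,7)] sim(1) by simp
  moreover have "Determinant.det X = Determinant.det P * (Determinant.det T * Determinant.det Q)"
    using sim by (simp add: det_mult[of _ n])
  ultimately have "Determinant.det X = Determinant.det T"
    by (simp add: ac_simps)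
  then show "Determinant.det X = prod_list es"
    using det_upper_triangular[OF ut sim(5)] diag by simp
  have "mat_trace X = mat_trace (P * (T * Q))"
    using sim by (simp add: assoc_mult_mat[of _ n n _ n _ n])
  also have "\<dots> = mat_trace (T * Q * P)"
    by (rule mat_trace_mult_comm[of _ n n]) (use sim in auto)
  also have "\<dots> = mat_trace T"
    using sim by (simp add: assoc_mult_mat[of _ n n _ n _ n])
  also have "\<dots> = sum_list es"
    using sim unfolding diag[symmetric] mat_trace_def diag_mat_def
    by (simp add: sum_list_sum_nth atLeast0LessThan)
  finally show "mat_trace X = sum_list es" .
qed

(* (A *v v) \<bullet>c v is v^* A v, and in the order of HOL-Library.Complex_Order
   0 < z means that z is a positive real. *)
definition positive_definite_cmat :: "complex mat \<Rightarrow> bool" where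
  "positive_definite_cmat A \<longleftrightarrow>
     (\<forall>v \<in> carrier_vec (dim_col A). v \<noteq> 0\<^sub>v (dim_col A) \<longrightarrow> 0 < (A *\<^sub>v v) \<bullet>c v)"

lemma positive_definite_one_mat: "positive_definite_cmat (1\<^sub>m n)"
  by (simp add: positive_definite_cmat_def)

(* For an eigenvector v of X, v^* (A X) v = e * v^* A v. *)
lemma eigenvalue_pos_if_mult_positive_definite:
  assumes A: "A \<in> carrier_mat n n" and X: "X \<in> carrier_mat n n"
    and pd: "positive_definite_cmat A" "positive_definite_cmat (A * X)"
    and e: "eigenvalue X e"
  shows "0 < e"
proof -
  obtain v where v: "v \<in> carrier_vec n" "v \<noteq> 0\<^sub>v n" "X *\<^sub>v v = e \<cdot>\<^sub>v v"
    using e X unfolding eigenvalue_def eigenvector_def by auto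
  have qA: "0 < (A *\<^sub>v v) \<bullet>c v" and qAX: "0 < (A * X *\<^sub>v v) \<bullet>c v"
    using pd v A X unfolding positive_definite_cmat_def by auto
  have "(A * X *\<^sub>v v) \<bullet>c v = e * ((A *\<^sub>v v) \<bullet>c v)"
    using A X v by (simp add: assoc_mult_mat_vec mult_mat_vec)
  with qA qAX show ?thesis
    by (auto simp: less_complex_def zero_less_mult_iff)
qed

lemma det_root_le_mean_trace_if_mult_positive_definite:
  assumes A: "A \<in> carrier_mat n n" and X: "X \<in> carrier_mat n n" and n: "n > 0"
    and pd: "positive_definite_cmat A" "positive_definite_cmat (A * X)"
  shows "0 < Re (Determinant.det X)"
    and "Re (Determinant.det X) powr (1 / real n) \<le> Re (mat_trace X) / real n"
proof -
  obtain es where cp: "char_poly X = (\<Prod>e\<leftarrow>es. [:- e, 1:])" and len: "length es = n"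
    using char_poly_factorized[OF X] by blast
  have pos: "0 < e" if "e \<in> set es" for e
  proof (rule eigenvalue_pos_if_mult_positive_definite[OF A X pd])
    have "poly (char_poly X) e = 0"
      unfolding cp using that by (induction es) (auto simp: poly_prod_list)
    then show "eigenvalue X e"
      using eigenvalue_root_char_poly[OF X] by simp
  qed
  define rs where "rs = map Re es"
  have es: "es = map complex_of_real rs"
    unfolding rs_def map_map using pos
    by (intro map_idI[symmetric]) (auto simp: less_complex_def complex_eq_iff)
  have rs_pos: "0 < rs ! i" if "i < n" for i
    using pos[OF nth_mem, of i] that len by (simp add: rs_def less_complex_def)
  have lrs: "length rs = n" using len by (simp add: rs_def)
  have "prod_list es = complex_of_real (prod_list rs)" "sum_list es = complex_of_real (sum_list rs)"
    unfolding es by (induction rs) auto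
  then have "Re (Determinant.det X) = prod_list rs" "Re (mat_trace X) = sum_list rs"
    by (simp_all add: det_trace_eq_eigenvalues[OF X cp])
  then have det: "Re (Determinant.det X) = (\<Prod>i<n. rs ! i)"
    and trace: "Re (mat_trace X) = (\<Sum>i<n. rs ! i)"
    by (simp_all add: prod.list_conv_set_nth sum.list_conv_set_nth lrs atLeast0LessThan)
  show "0 < Re (Determinant.det X)"
    unfolding det using rs_pos by (intro prod_pos) auto
  show "Re (Determinant.det X) powr (1 / real n) \<le> Re (mat_trace X) / real n"
    using arith_geom_mean[of "{..<n}" "\<lambda>i. rs ! i"] n rs_pos
    unfolding det trace by (force simp: sum_divide_distrib)
qed

section \<open>Real matrices as complex matrices\<close>

lemma bij_betw_map_permutation:
  assumes "bij_betw f A B"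
  shows "bij_betw (map_permutation A f) {p. p permutes A} {q. q permutes B}"
proof (rule bij_betwI[where g = "map_permutation B (inv_into A f)"])
  have inv: "bij_betw (inv_into A f) B A"
    by (rule bij_betw_inv_into[OF assms])
  show "map_permutation A f \<in> {p. p permutes A} \<rightarrow> {q. q permutes B}"
    using map_permutation_permutes[OF assms] by auto
  show "map_permutation B (inv_into A f) \<in> {q. q permutes B} \<rightarrow> {p. p permutes A}"
    using map_permutation_permutes[OF inv] by auto
  show "map_permutation B (inv_into A f) (map_permutation A f p) = p" if "p \<in> {p. p permutes A}" for p
    using map_permutation_compose_inv[OF assms] that assms by (auto simp: bij_betw_inv_into_left)
  show "map_permutation A f (map_permutation B (inv_into A f) q) = q" if "q \<in> {q. q permutes B}" for q
    using map_permutation_compose_inv[OF inv] that assms by (auto simp: bij_betw_inv_into_right)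
qed

(* Eigenvalues of real matrices are complex in general, so the eigenvalue argument runs on
   complex JNF matrices; g enumerates the index type. *)
definition cmat_of :: "(nat \<Rightarrow> 'n::finite) \<Rightarrow> real^'n^'n \<Rightarrow> complex mat" where
  "cmat_of g A = Matrix.mat CARD('n) CARD('n) (\<lambda>(i, j). complex_of_real (A $ g i $ g j))"

lemma cmat_of_carrier [simp]: "cmat_of (g :: nat \<Rightarrow> 'n::finite) A \<in> carrier_mat CARD('n) CARD('n)"
  and dim_row_cmat_of [simp]: "dim_row (cmat_of g A) = CARD('n)"
  and dim_col_cmat_of [simp]: "dim_col (cmat_of g A) = CARD('n)"
  by (simp_all add: cmat_of_def)

lemma index_cmat_of [simp]:
  "i < CARD('n) \<Longrightarrow> j < CARD('n) \<Longrightarrow> cmat_of g A $$ (i, j) = complex_of_real (A $ g i $ (g j :: 'n::finite))"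
  by (simp add: cmat_of_def)

locale index_enumeration =
  fixes g :: "nat \<Rightarrow> 'n::finite"
  assumes bij: "bij_betw g {..<CARD('n)} UNIV"
begin

lemma inj_enum: "inj_on g {..<CARD('n)}"
  using bij by (rule bij_betw_imp_inj_on)

lemma sum_UNIV_enum: "(\<Sum>c\<in>UNIV. F c) = (\<Sum>k<CARD('n). F (g k))"
  using sum.reindex_bij_betw[OF bij, of F] by simp

lemma prod_UNIV_enum: "(\<Prod>c\<in>UNIV. F c) = (\<Prod>k<CARD('n). F (g k))"
  using prod.reindex_bij_betw[OF bij, of F] by simp

lemma cmat_of_mult: "cmat_of g (A ** B) = cmat_of g A * cmat_of g B"
  by (rule eq_matI) (auto simp: scalar_prod_def matrix_matrix_mult_def sum_UNIV_enum atLeast0LessThan)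

lemma cmat_of_one: "cmat_of g (Finite_Cartesian_Product.mat 1) = 1\<^sub>m CARD('n)"
proof (rule eq_matI)
  fix i j assume "i < dim_row (1\<^sub>m CARD('n))" "j < dim_col (1\<^sub>m CARD('n))"
  moreover from this have "g i = g j \<longleftrightarrow> i = j"
    using inj_enum by (auto simp: inj_on_def)
  ultimately show "cmat_of g (Finite_Cartesian_Product.mat 1) $$ (i, j) = 1\<^sub>m CARD('n) $$ (i, j)"
    by (simp add: Finite_Cartesian_Product.mat_def)
qed auto

lemma mat_trace_cmat_of: "mat_trace (cmat_of g A) = complex_of_real (trace A)"
  by (simp add: mat_trace_def trace_def sum_UNIV_enum)

lemma det_cmat_of: "Determinant.det (cmat_of g A) = complex_of_real (Determinants.det A)"
proof -
  let ?n = "CARD('n)"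
  have perms: "bij_betw (map_permutation {..<?n} g) {p. p permutes {..<?n}} {q. q permutes UNIV}"
    by (rule bij_betw_map_permutation[OF bij])
  have "Determinants.det A = (\<Sum>q | q permutes UNIV. of_int (sign q) * (\<Prod>a\<in>UNIV. A $ a $ q a))"
    by (simp add: Determinants.det_def)
  also have "\<dots> = (\<Sum>p | p permutes {..<?n}. of_int (sign (map_permutation {..<?n} g p)) *
      (\<Prod>a\<in>UNIV. A $ a $ map_permutation {..<?n} g p a))"
    by (rule sum.reindex_bij_betw[OF perms, symmetric])
  also have "\<dots> = (\<Sum>p | p permutes {..<?n}. of_int (sign p) * (\<Prod>i<?n. A $ g i $ g (p i)))"
    using inj_enum by (intro sum.cong refl)
      (auto simp: sign_map_permutation prod_UNIV_enum map_permutation_apply)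
  finally have "complex_of_real (Determinants.det A) =
      (\<Sum>p | p permutes {..<?n}. of_int (sign p) * (\<Prod>i<?n. complex_of_real (A $ g i $ g (p i))))"
    by simp
  also have "\<dots> = Determinant.det (cmat_of g A)"
    by (auto simp: det_def'[OF cmat_of_carrier] atLeast0LessThan dest: permutes_in_image
        intro!: sum.cong prod.cong)
  finally show ?thesis ..
qed

end

lemma ex_index_enumeration: "\<exists>g. index_enumeration (g :: nat \<Rightarrow> 'n::finite)"
  using ex_bij_betw_nat_finite[of "UNIV :: 'n set"]
  by (auto simp: index_enumeration_def atLeast0LessThan)

section \<open>Inverses of real matrices and weighted Cauchy-Schwarz\<close>

lemma matrix_inv_right:
  fixes A :: "'a::semiring_1^'n^'n"
  assumes "invertible A"
  shows "A ** matrix_inv A = Finite_Cartesian_Product.mat 1"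
  using someI_ex[OF assms[unfolded invertible_def]] unfolding matrix_inv_def by auto

lemma matrix_inv_left:
  fixes A :: "'a::semiring_1^'n^'n"
  assumes "invertible A"
  shows "matrix_inv A ** A = Finite_Cartesian_Product.mat 1"
  using someI_ex[OF assms[unfolded invertible_def]] unfolding matrix_inv_def by auto

lemma transpose_matrix_inv_symmetric:
  fixes M :: "real^'n^'n"
  assumes "invertible M" and "transpose M = M"
  shows "transpose (matrix_inv M) = matrix_inv M"
proof -
  let ?P = "matrix_inv M"
  have "transpose ?P ** M = Finite_Cartesian_Product.mat 1"
    by (metis assms matrix_inv_right matrix_transpose_mul transpose_mat)
  then have "transpose ?P = transpose ?P ** (M ** ?P)"
    by (simp add: matrix_inv_right[OF assms(1)])
  also have "\<dots> = (transpose ?P ** M) ** ?P"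
    by (simp add: matrix_mul_assoc)
  also have "\<dots> = ?P"
    using \<open>transpose ?P ** M = _\<close> by simp
  finally show ?thesis .
qed

lemma weighted_Cauchy_Schwarz:
  fixes u w :: "'a \<Rightarrow> 'b::real_inner"
  assumes "\<And>x. x \<in> A \<Longrightarrow> 0 \<le> \<xi> x"
  shows "(\<Sum>x\<in>A. \<xi> x * (u x \<bullet> w x))\<^sup>2 \<le>
    (\<Sum>x\<in>A. \<xi> x * (norm (u x))\<^sup>2) * (\<Sum>x\<in>A. \<xi> x * (norm (w x))\<^sup>2)"
proof -
  have "\<bar>\<Sum>x\<in>A. \<xi> x * (u x \<bullet> w x)\<bar> \<le> (\<Sum>x\<in>A. \<xi> x * (norm (u x) * norm (w x)))"
    using assms by (intro sum_abs[THEN order_trans] sum_mono)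
      (auto simp: abs_mult Cauchy_Schwarz_ineq2 mult_left_mono)
  then have "(\<Sum>x\<in>A. \<xi> x * (u x \<bullet> w x))\<^sup>2 \<le> (\<Sum>x\<in>A. \<xi> x * (norm (u x) * norm (w x)))\<^sup>2"
    by (metis abs_ge_zero order_trans power2_abs power_mono)
  also have "\<dots> = (\<Sum>x\<in>A. (sqrt (\<xi> x) * norm (u x)) * (sqrt (\<xi> x) * norm (w x)))\<^sup>2"
    using assms by (intro arg_cong[where f = "\<lambda>t. t\<^sup>2"] sum.cong) (auto simp: algebra_simps)
  also have "\<dots> \<le> (\<Sum>x\<in>A. (sqrt (\<xi> x) * norm (u x))\<^sup>2) * (\<Sum>x\<in>A. (sqrt (\<xi> x) * norm (w x))\<^sup>2)"
    by (rule Cauchy_Schwarz_ineq_sum)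
  also have "\<dots> = (\<Sum>x\<in>A. \<xi> x * (norm (u x))\<^sup>2) * (\<Sum>x\<in>A. \<xi> x * (norm (w x))\<^sup>2)"
    using assms by (simp add: power_mult_distrib)
  finally show ?thesis .
qed

section \<open>Information matrices\<close>

lemma info_matrix_component:
  "info_matrix f \<xi> $ a $ b = (\<Sum>x\<in>UNIV. \<xi> x * (f x $ a * f x $ b))"
  by (simp add: info_matrix_def sum_component)

lemma transpose_info_matrix: "transpose (info_matrix f \<xi>) = info_matrix f \<xi>"
  by (simp add: Finite_Cartesian_Product.vec_eq_iff transpose_def info_matrix_component mult.commute)

lemma sum_quadratic_form_eq_trace:
  "(\<Sum>x\<in>UNIV. \<xi> x * (f x \<bullet> (Z *v f x))) = trace (Z ** info_matrix f \<xi>)"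
proof -
  have "(\<Sum>x\<in>UNIV. \<xi> x * (f x \<bullet> (Z *v f x))) =
      (\<Sum>x\<in>UNIV. \<Sum>i\<in>UNIV. \<Sum>k\<in>UNIV. Z $ i $ k * (\<xi> x * (f x $ k * f x $ i)))"
    by (simp add: inner_vec_def matrix_vector_mult_def sum_distrib_left mult_ac)
  also have "\<dots> = (\<Sum>i\<in>UNIV. \<Sum>k\<in>UNIV. \<Sum>x\<in>UNIV. Z $ i $ k * (\<xi> x * (f x $ k * f x $ i)))"
    by (subst sum.swap) (intro sum.cong refl sum.swap)
  also have "\<dots> = trace (Z ** info_matrix f \<xi>)"
    by (simp add: trace_def matrix_matrix_mult_def info_matrix_component sum_distrib_left)
  finally show ?thesis .
qed

lemma sum_inner_eq_trace:
  fixes f :: "'x::finite \<Rightarrow> real^'n" and X Y :: "real^'n^'m"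
  shows "(\<Sum>x\<in>UNIV. \<xi> x * ((X *v f x) \<bullet> (Y *v f x))) = trace (transpose X ** Y ** info_matrix f \<xi>)"
proof -
  have "(X *v v) \<bullet> (Y *v v) = v \<bullet> ((transpose X ** Y) *v v)" for v
  proof -
    have "X *v v = v v* transpose X"
      using transpose_matrix_vector[of "transpose X" v] by simp
    then show ?thesis
      by (simp only: dot_lmul_matrix matrix_vector_mul_assoc)
  qed
  then show ?thesis
    by (simp add: sum_quadratic_form_eq_trace)
qed

context index_enumeration
begin

lemma cmat_of_info_matrix_mult_vec:
  assumes v: "v \<in> carrier_vec CARD('n)" and i: "i < CARD('n)"
  shows "vec_index (cmat_of g (info_matrix f \<xi>) *\<^sub>v v) i =
    (\<Sum>x\<in>UNIV. complex_of_real (\<xi> x * f x $ g i) *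
       (\<Sum>j<CARD('n). complex_of_real (f x $ g j) * vec_index v j))"
proof -
  have "vec_index (cmat_of g (info_matrix f \<xi>) *\<^sub>v v) i =
      (\<Sum>j<CARD('n). \<Sum>x\<in>UNIV. complex_of_real (\<xi> x * f x $ g i) *
         (complex_of_real (f x $ g j) * vec_index v j))"
    using v i by (simp add: scalar_prod_def atLeast0LessThan info_matrix_component
        sum_distrib_left sum_distrib_right mult_ac)
  then show ?thesis
    by (subst (asm) sum.swap) (simp add: sum_distrib_left)
qed

lemma quadratic_form_cmat_of_info_matrix:
  assumes v: "v \<in> carrier_vec CARD('n)"
  shows "(cmat_of g (info_matrix f \<xi>) *\<^sub>v v) \<bullet>c v =
    complex_of_real (\<Sum>x\<in>UNIV. \<xi> x * (cmod (\<Sum>j<CARD('n). complex_of_real (f x $ g j) * vec_index v j))\<^sup>2)"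
proof -
  define c where "c x = (\<Sum>j<CARD('n). complex_of_real (f x $ g j) * vec_index v j)" for x
  have "(cmat_of g (info_matrix f \<xi>) *\<^sub>v v) \<bullet>c v =
      (\<Sum>i<CARD('n). vec_index (cmat_of g (info_matrix f \<xi>) *\<^sub>v v) i * cnj (vec_index v i))"
    using v by (simp add: scalar_prod_def atLeast0LessThan del: index_mult_mat_vec)
  also have "\<dots> = (\<Sum>i<CARD('n). (\<Sum>x\<in>UNIV. complex_of_real (\<xi> x * f x $ g i) * c x) * cnj (vec_index v i))"
    by (rule sum.cong[OF refl]) (simp add: cmat_of_info_matrix_mult_vec[OF v] c_def del: index_mult_mat_vec)
  also have "\<dots> = (\<Sum>i<CARD('n). \<Sum>x\<in>UNIV. complex_of_real (\<xi> x) * c x *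
      (complex_of_real (f x $ g i) * cnj (vec_index v i)))"
    by (simp add: sum_distrib_left sum_distrib_right mult_ac)
  also have "\<dots> = (\<Sum>x\<in>UNIV. complex_of_real (\<xi> x) * c x * cnj (c x))"
    by (subst sum.swap) (simp add: c_def sum_distrib_left cnj_sum)
  also have "\<dots> = complex_of_real (\<Sum>x\<in>UNIV. \<xi> x * (cmod (c x))\<^sup>2)"
    by (simp only: mult.assoc flip: complex_norm_square of_real_mult of_real_sum)
  finally show ?thesis unfolding c_def .
qed

lemma positive_definite_cmat_of_info_matrix:
  assumes \<xi>: "\<xi> \<in> designs" and inv: "invertible (info_matrix f \<xi>)"
  shows "positive_definite_cmat (cmat_of g (info_matrix f \<xi>))"
  unfolding positive_definite_cmat_def dim_col_cmat_of
proof (intro ballI impI)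
  let ?N = "info_matrix f \<xi>"
  fix v :: "complex vec"
  assume v: "v \<in> carrier_vec CARD('n)" and "v \<noteq> 0\<^sub>v CARD('n)"
  define c where "c x = (\<Sum>j<CARD('n). complex_of_real (f x $ g j) * vec_index v j)" for x
  have nonneg: "0 \<le> \<xi> x" for x
    using \<xi> by (simp add: designs_def)
  have "(\<Sum>x\<in>UNIV. \<xi> x * (cmod (c x))\<^sup>2) \<noteq> 0"
  proof
    assume "(\<Sum>x\<in>UNIV. \<xi> x * (cmod (c x))\<^sup>2) = 0"
    then have "\<xi> x * (cmod (c x))\<^sup>2 = 0" for x
      using nonneg by (simp add: sum_nonneg_eq_0_iff)
    then have "complex_of_real (\<xi> x * f x $ g i) * c x = 0" for x i
      by auto
    then have "cmat_of g ?N *\<^sub>v v = 0\<^sub>v CARD('n)"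
      by (intro eq_vecI) (simp_all add: cmat_of_info_matrix_mult_vec[OF v] c_def del: index_mult_mat_vec)
    then have "cmat_of g (matrix_inv ?N) *\<^sub>v (cmat_of g ?N *\<^sub>v v) = 0\<^sub>v CARD('n)"
      using cmat_of_carrier by auto
    moreover have "cmat_of g (matrix_inv ?N) *\<^sub>v (cmat_of g ?N *\<^sub>v v) = v"
      using v by (simp add: assoc_mult_mat_vec[symmetric, of _ "CARD('n)" "CARD('n)" _ "CARD('n)"]
          flip: cmat_of_mult add: matrix_inv_left[OF inv] cmat_of_one)
    ultimately show False
      using \<open>v \<noteq> 0\<^sub>v CARD('n)\<close> by simp
  qed
  moreover have "0 \<le> (\<Sum>x\<in>UNIV. \<xi> x * (cmod (c x))\<^sup>2)"
    using nonneg by (intro sum_nonneg) simp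
  ultimately show "0 < (cmat_of g ?N *\<^sub>v v) \<bullet>c v"
    unfolding quadratic_form_cmat_of_info_matrix[OF v] c_def[symmetric] by (simp add: less_complex_def)
qed

end

lemma det_info_matrix_pos:
  fixes f :: "'x::finite \<Rightarrow> real^'p"
  assumes "\<xi> \<in> designs_plus f"
  shows "0 < Determinants.det (info_matrix f \<xi>)"
proof -
  obtain g :: "nat \<Rightarrow> 'p" where "index_enumeration g"
    using ex_index_enumeration by blast
  then interpret index_enumeration g .
  let ?X = "cmat_of g (info_matrix f \<xi>)"
  have "positive_definite_cmat (1\<^sub>m CARD('p) * ?X)"
    using assms by (auto simp: designs_plus_def intro!: positive_definite_cmat_of_info_matrix)
  from det_root_le_mean_trace_if_mult_positive_definite(1)
    [OF one_carrier_mat cmat_of_carrier zero_less_card_finite positive_definite_one_mat this]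
  show ?thesis
    by (simp add: det_cmat_of)
qed

lemma det_root_info_matrix_le:
  fixes f :: "'x::finite \<Rightarrow> real^'p"
  assumes \<mu>: "\<mu> \<in> designs_plus f" and \<xi>: "\<xi> \<in> designs_plus f"
  defines "M \<equiv> info_matrix f \<mu>" and "N \<equiv> info_matrix f \<xi>"
  shows "Determinants.det N powr (1 / CARD('p)) \<le>
    Determinants.det M powr (1 / CARD('p)) * (trace (matrix_inv M ** N) / CARD('p))"
proof -
  obtain g :: "nat \<Rightarrow> 'p" where "index_enumeration g"
    using ex_index_enumeration by blast
  then interpret index_enumeration g .
  define S where "S = matrix_inv M ** N"
  have MS: "M ** S = N"
    using \<mu> by (simp add: S_def M_def designs_plus_def matrix_mul_assoc matrix_inv_right)
  have pdM: "positive_definite_cmat (cmat_of g M)"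
    using \<mu> by (auto simp: M_def designs_plus_def intro!: positive_definite_cmat_of_info_matrix)
  have pdMS: "positive_definite_cmat (cmat_of g M * cmat_of g S)"
    unfolding cmat_of_mult[symmetric] MS
    using \<xi> by (auto simp: N_def designs_plus_def intro!: positive_definite_cmat_of_info_matrix)
  note amgm = det_root_le_mean_trace_if_mult_positive_definite
    [OF cmat_of_carrier cmat_of_carrier zero_less_card_finite pdM pdMS]
  have detS: "0 < Determinants.det S" "Determinants.det S powr (1 / CARD('p)) \<le> trace S / CARD('p)"
    using amgm by (simp_all add: det_cmat_of mat_trace_cmat_of)
  have "Determinants.det N = Determinants.det M * Determinants.det S"
    by (simp add: det_mul flip: MS)
  then have "Determinants.det N powr (1 / CARD('p)) =
      Determinants.det M powr (1 / CARD('p)) * Determinants.det S powr (1 / CARD('p))"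
    using det_info_matrix_pos[OF \<mu>] detS(1) by (simp add: M_def powr_mult)
  also have "\<dots> \<le> Determinants.det M powr (1 / CARD('p)) * (trace S / CARD('p))"
    using detS(2) by (rule mult_left_mono) simp
  finally show ?thesis
    unfolding S_def .
qed

section \<open>Gradient bounds for the D- and A-criteria\<close>

lemma phi_D_le_sum_H_D:
  fixes f :: "'x::finite \<Rightarrow> real^'p"
  assumes "\<mu> \<in> designs_plus f" and "\<xi> \<in> designs_plus f"
  shows "phi_D f \<xi> \<le> (\<Sum>x\<in>UNIV. H_D f \<mu> x * \<xi> x)"
proof -
  let ?P = "matrix_inv (info_matrix f \<mu>)"
  have "(\<Sum>x\<in>UNIV. H_D f \<mu> x * \<xi> x) =
      phi_D f \<mu> * (\<Sum>x\<in>UNIV. \<xi> x * (f x \<bullet> (?P *v f x))) / CARD('p)"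
    by (simp add: H_D_def sum_distrib_left sum_divide_distrib mult_ac)
  then show ?thesis
    using det_root_info_matrix_le[OF assms]
    by (simp add: sum_quadratic_form_eq_trace phi_D_def)
qed

lemma trace_matrix_inv_info_matrix_pos:
  fixes f :: "'x::finite \<Rightarrow> real^'p"
  assumes "\<mu> \<in> designs_plus f"
  shows "0 < trace (matrix_inv (info_matrix f \<mu>))"
proof -
  let ?M = "info_matrix f \<mu>"
  let ?P = "matrix_inv ?M" and ?I = "Finite_Cartesian_Product.mat 1 :: real^'p^'p"
  have inv: "invertible ?M" and nonneg: "\<And>x. 0 \<le> \<mu> x"
    using assms by (auto simp: designs_plus_def designs_def)
  have sym: "transpose ?P = ?P"
    by (rule transpose_matrix_inv_symmetric[OF inv transpose_info_matrix])
  have trace_P: "(\<Sum>x\<in>UNIV. \<mu> x * (norm (?P *v f x))\<^sup>2) = trace ?P"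
    using sum_inner_eq_trace[of \<mu> ?P f ?P]
    by (simp add: sym power2_norm_eq_inner matrix_inv_left[OF inv] flip: matrix_mul_assoc)
  \<comment> \<open>Cauchy-Schwarz applied to \<open>CARD('p) = trace (P M) = (\<Sum>x. \<mu> x * \<langle>P f x, f x\<rangle>)\<close>\<close>
  have "(\<Sum>x\<in>UNIV. \<mu> x * ((?P *v f x) \<bullet> (?I *v f x))) = CARD('p)"
    using sum_inner_eq_trace[of \<mu> ?P f ?I]
    by (simp add: sym matrix_inv_left[OF inv] trace_I)
  then have "(real CARD('p))\<^sup>2 \<le> trace ?P * (\<Sum>x\<in>UNIV. \<mu> x * (norm (?I *v f x))\<^sup>2)"
    using weighted_Cauchy_Schwarz[of UNIV \<mu> "\<lambda>x. ?P *v f x" "\<lambda>x. ?I *v f x"] nonneg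
    by (simp add: trace_P)
  moreover have "0 \<le> trace ?P"
    unfolding trace_P[symmetric] using nonneg by (intro sum_nonneg) simp
  ultimately show ?thesis
    by (cases "trace ?P = 0") auto
qed

lemma phi_A_le_sum_H_A:
  fixes f :: "'x::finite \<Rightarrow> real^'p"
  assumes \<mu>: "\<mu> \<in> designs_plus f" and \<xi>: "\<xi> \<in> designs_plus f" and pos: "0 < phi_A f \<xi>"
  shows "phi_A f \<xi> \<le> (\<Sum>x\<in>UNIV. H_A f \<mu> x * \<xi> x)"
proof -
  define P where "P = matrix_inv (info_matrix f \<mu>)"
  define N where "N = info_matrix f \<xi>"
  define Q where "Q = matrix_inv N"
  define U where "U = (\<Sum>x\<in>UNIV. \<xi> x * (norm (P *v f x))\<^sup>2)"
  have invM: "invertible (info_matrix f \<mu>)" and invN: "invertible N" and nonneg: "\<And>x. 0 \<le> \<xi> x"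
    using \<mu> \<xi> by (auto simp: designs_plus_def designs_def N_def)
  have "transpose P = P"
    unfolding P_def by (rule transpose_matrix_inv_symmetric[OF invM transpose_info_matrix])
  moreover have "transpose Q = Q"
    unfolding Q_def N_def by (rule transpose_matrix_inv_symmetric[OF invN[unfolded N_def] transpose_info_matrix])
  \<comment> \<open>\<open>trace P = trace (P N Q)\<close> is a weighted inner product of \<open>P f x\<close> and \<open>Q f x\<close>\<close>
  ultimately have "(\<Sum>x\<in>UNIV. \<xi> x * ((P *v f x) \<bullet> (Q *v f x))) = trace P"
    and "(\<Sum>x\<in>UNIV. \<xi> x * (norm (Q *v f x))\<^sup>2) = trace Q"
    using matrix_inv_left[OF invN]
    by (simp_all add: sum_inner_eq_trace power2_norm_eq_inner N_def[symmetric] Q_def[symmetric]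
        flip: matrix_mul_assoc)
  then have CS: "(trace P)\<^sup>2 \<le> U * trace Q"
    using weighted_Cauchy_Schwarz[of UNIV \<xi> "\<lambda>x. P *v f x" "\<lambda>x. Q *v f x"] nonneg
    by (simp add: U_def)
  have "0 < trace Q" and "0 < trace P"
    using pos trace_matrix_inv_info_matrix_pos[OF \<mu>]
    by (simp_all add: phi_A_def Q_def N_def P_def)
  then have "phi_A f \<xi> \<le> U / (trace P)\<^sup>2"
    using CS by (simp add: phi_A_def Q_def N_def field_simps)
  also have "\<dots> = (\<Sum>x\<in>UNIV. H_A f \<mu> x * \<xi> x)"
    by (simp add: H_A_def U_def P_def sum_divide_distrib mult.commute)
  finally show ?thesis .
qed

theorem mainTheorem5:
  fixes f :: "'x::finite \<Rightarrow> real^'p"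
    and a \<epsilon> t' :: real
    and \<Xi>' :: "('x \<Rightarrow> real) set"
    and \<xi>' :: "'x \<Rightarrow> real"
    and A' A :: "('x \<Rightarrow> real) set"
  assumes "a > 0" and "\<epsilon> > 0"
    and "finite \<Xi>'" and "\<Xi>' \<noteq> {}" and "\<Xi>' \<subseteq> designs_plus f"
    and A'_def: "A' = {\<xi> \<in> designs. \<forall>\<mu>\<in>\<Xi>'. (\<Sum>x\<in>UNIV. H_A f \<mu> x * \<xi> x) \<ge> a}"
    and A_def: "A = {\<xi> \<in> designs_plus f. phi_A f \<xi> \<ge> a}"
    and feasible: "\<xi>' \<in> A'" "\<forall>\<mu>\<in>\<Xi>'. (\<Sum>x\<in>UNIV. H_D f \<mu> x * \<xi>' x) \<ge> t'"
    and optimal: "\<forall>\<xi> t. \<xi> \<in> A' \<and> (\<forall>\<mu>\<in>\<Xi>'. (\<Sum>x\<in>UNIV. H_D f \<mu> x * \<xi> x) \<ge> t) \<longrightarrow> t \<le> t'"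
  shows "A \<subseteq> A' \<and> (SUP \<xi>\<in>A. ereal (phi_D f \<xi>)) \<le> ereal t' \<and>
    ((\<xi>' \<in> designs_plus f \<and> phi_A f \<xi>' \<ge> a \<and> t' - phi_D f \<xi>' < \<epsilon>) \<longrightarrow>
      (\<xi>' \<in> A \<and> ereal (phi_D f \<xi>') > (SUP \<xi>\<in>A. ereal (phi_D f \<xi>)) - ereal \<epsilon>))"
proof -
  have "a \<le> (\<Sum>x\<in>UNIV. H_A f \<mu> x * \<xi> x)" if "\<xi> \<in> A" "\<mu> \<in> \<Xi>'" for \<xi> \<mu>
    using that phi_A_le_sum_H_A[of \<mu> f \<xi>] \<open>a > 0\<close> \<open>\<Xi>' \<subseteq> designs_plus f\<close>
    by (fastforce simp: A_def)
  then have subset: "A \<subseteq> A'"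
    by (auto simp: A'_def A_def designs_plus_def)
  have "phi_D f \<xi> \<le> t'" if "\<xi> \<in> A" for \<xi>
    using that subset optimal phi_D_le_sum_H_D[of _ f \<xi>] \<open>\<Xi>' \<subseteq> designs_plus f\<close>
    by (force simp: A_def)
  then have sup: "(SUP \<xi>\<in>A. ereal (phi_D f \<xi>)) \<le> ereal t'"
    by (simp add: SUP_least)
  have "(SUP \<xi>\<in>A. ereal (phi_D f \<xi>)) - ereal \<epsilon> < ereal (phi_D f \<xi>')"
    if "t' - phi_D f \<xi>' < \<epsilon>"
  proof -
    have "(SUP \<xi>\<in>A. ereal (phi_D f \<xi>)) - ereal \<epsilon> \<le> ereal (t' - \<epsilon>)"
      using ereal_minus_mono[OF sup order.refl, of "ereal \<epsilon>"] by simp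
    also have "\<dots> < ereal (phi_D f \<xi>')"
      using that by simp
    finally show ?thesis .
  qed
  with subset sup show ?thesis
    by (auto simp: A_def)
qed

end
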